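(* Let $F:\mathcal{A}\to \mathcal{B}$ be a fully faithful (additive) covariant functor between abelian categories, and let $M$ and $N$ be objects of $\mathcal{A}$. (1) Assume that $F$ is left exact. Then $N$ is strongly $M$-Rickart in $\mathcal{A}$ if and only if $F(N)$ is strongly $F(M)$-Rickart in $\mathcal{B}$. (2) Assume that $F$ is right exact. Then $N$ is dual strongly $M$-Rickart in $\mathcal{A}$ if and only if $F(N)$ is dual strongly $F(M)$-Rickart in $\mathcal{B}$.
   Context: A morphism $f:X\to Y$ is a section if $f'f=1_X$ for some $f'$, a retraction if $ff'=1_Y$ for some $f'$. A monomorphism $k:K\to X$ is fully invariant if for every $h:X\to X$ there is $\alpha:K\to K$ with $hk=k\alpha$; an epimorphism $c:X\to C$ is fully coinvariant if for every $h:X\to X$ there is $\gamma:C\to C$ with $ch=\gamma c$. For objects $M,N$: $N$ is strongly $M$-Rickart if the kernel of every morphism $f:M\to N$ is a fully invariant section; $N$ is dual strongly $M$-Rickart if the cokernel of every morphism $f:M\to N$ is a fully coinvariant retraction. *)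

theory Defs
  imports Main
begin

text \<open>A category with explicit object set and arrow set; each arrow has a domain
and codomain; cat_comp C g f is the composite "g after f".\<close>

record ('o, 'm) cat =
  cat_obj  :: "'o set"
  cat_arr  :: "'m set"
  cat_dom  :: "'m \<Rightarrow> 'o"
  cat_cod  :: "'m \<Rightarrow> 'o"
  cat_comp :: "'m \<Rightarrow> 'm \<Rightarrow> 'm"
  cat_id   :: "'o \<Rightarrow> 'm"
  cat_add  :: "'m \<Rightarrow> 'm \<Rightarrow> 'm"
  cat_zero :: "'o \<Rightarrow> 'o \<Rightarrow> 'm"
  cat_neg  :: "'m \<Rightarrow> 'm"

definition hom :: "('o, 'm) cat \<Rightarrow> 'o \<Rightarrow> 'o \<Rightarrow> 'm set" where
  "hom C a b = {f \<in> cat_arr C. cat_dom C f = a \<and> cat_cod C f = b}"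

definition is_category :: "('o, 'm) cat \<Rightarrow> bool" where
  "is_category C \<longleftrightarrow>
     (\<forall>f \<in> cat_arr C. cat_dom C f \<in> cat_obj C \<and> cat_cod C f \<in> cat_obj C) \<and>
     (\<forall>a \<in> cat_obj C. cat_id C a \<in> hom C a a) \<and>
     (\<forall>a \<in> cat_obj C. \<forall>b \<in> cat_obj C. \<forall>c \<in> cat_obj C. \<forall>f \<in> hom C a b. \<forall>g \<in> hom C b c.
        cat_comp C g f \<in> hom C a c) \<and>
     (\<forall>a \<in> cat_obj C. \<forall>b \<in> cat_obj C. \<forall>c \<in> cat_obj C. \<forall>d \<in> cat_obj C.
        \<forall>f \<in> hom C a b. \<forall>g \<in> hom C b c. \<forall>h \<in> hom C c d.
        cat_comp C h (cat_comp C g f) = cat_comp C (cat_comp C h g) f) \<and>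
     (\<forall>a \<in> cat_obj C. \<forall>b \<in> cat_obj C. \<forall>f \<in> hom C a b.
        cat_comp C f (cat_id C a) = f \<and> cat_comp C (cat_id C b) f = f)"

definition is_preadditive :: "('o, 'm) cat \<Rightarrow> bool" where
  "is_preadditive C \<longleftrightarrow> is_category C \<and>
     (\<forall>a \<in> cat_obj C. \<forall>b \<in> cat_obj C.
        cat_zero C a b \<in> hom C a b \<and>
        (\<forall>f \<in> hom C a b. \<forall>g \<in> hom C a b. cat_add C f g \<in> hom C a b) \<and>
        (\<forall>f \<in> hom C a b. cat_neg C f \<in> hom C a b) \<and>
        (\<forall>f \<in> hom C a b. \<forall>g \<in> hom C a b. \<forall>h \<in> hom C a b.
           cat_add C (cat_add C f g) h = cat_add C f (cat_add C g h)) \<and>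
        (\<forall>f \<in> hom C a b. \<forall>g \<in> hom C a b. cat_add C f g = cat_add C g f) \<and>
        (\<forall>f \<in> hom C a b. cat_add C f (cat_zero C a b) = f) \<and>
        (\<forall>f \<in> hom C a b. cat_add C f (cat_neg C f) = cat_zero C a b)) \<and>
     (\<forall>a \<in> cat_obj C. \<forall>b \<in> cat_obj C. \<forall>c \<in> cat_obj C.
        (\<forall>f \<in> hom C a b. \<forall>g \<in> hom C b c. \<forall>g' \<in> hom C b c.
           cat_comp C (cat_add C g g') f = cat_add C (cat_comp C g f) (cat_comp C g' f)) \<and>
        (\<forall>f \<in> hom C a b. \<forall>f' \<in> hom C a b. \<forall>g \<in> hom C b c.
           cat_comp C g (cat_add C f f') = cat_add C (cat_comp C g f) (cat_comp C g f')))"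

definition is_zero_object :: "('o, 'm) cat \<Rightarrow> 'o \<Rightarrow> bool" where
  "is_zero_object C z \<longleftrightarrow> z \<in> cat_obj C \<and>
     (\<forall>a \<in> cat_obj C. (\<exists>!f. f \<in> hom C z a) \<and> (\<exists>!f. f \<in> hom C a z))"

definition is_biproduct ::
    "('o, 'm) cat \<Rightarrow> 'o \<Rightarrow> 'o \<Rightarrow> 'o \<Rightarrow> 'm \<Rightarrow> 'm \<Rightarrow> 'm \<Rightarrow> 'm \<Rightarrow> bool" where
  "is_biproduct C a b p i1 i2 p1 p2 \<longleftrightarrow> p \<in> cat_obj C \<and>
     i1 \<in> hom C a p \<and> i2 \<in> hom C b p \<and> p1 \<in> hom C p a \<and> p2 \<in> hom C p b \<and>
     cat_comp C p1 i1 = cat_id C a \<and> cat_comp C p2 i2 = cat_id C b \<and>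
     cat_comp C p1 i2 = cat_zero C b a \<and> cat_comp C p2 i1 = cat_zero C a b \<and>
     cat_add C (cat_comp C i1 p1) (cat_comp C i2 p2) = cat_id C p"

definition is_additive_cat :: "('o, 'm) cat \<Rightarrow> bool" where
  "is_additive_cat C \<longleftrightarrow> is_preadditive C \<and>
     (\<exists>z. is_zero_object C z) \<and>
     (\<forall>a \<in> cat_obj C. \<forall>b \<in> cat_obj C. \<exists>p i1 i2 p1 p2. is_biproduct C a b p i1 i2 p1 p2)"

definition is_mono :: "('o, 'm) cat \<Rightarrow> 'm \<Rightarrow> bool" where
  "is_mono C k \<longleftrightarrow> k \<in> cat_arr C \<and>
     (\<forall>x \<in> cat_obj C. \<forall>g \<in> hom C x (cat_dom C k). \<forall>h \<in> hom C x (cat_dom C k).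
        cat_comp C k g = cat_comp C k h \<longrightarrow> g = h)"

definition is_epi :: "('o, 'm) cat \<Rightarrow> 'm \<Rightarrow> bool" where
  "is_epi C c \<longleftrightarrow> c \<in> cat_arr C \<and>
     (\<forall>x \<in> cat_obj C. \<forall>g \<in> hom C (cat_cod C c) x. \<forall>h \<in> hom C (cat_cod C c) x.
        cat_comp C g c = cat_comp C h c \<longrightarrow> g = h)"

definition is_kernel :: "('o, 'm) cat \<Rightarrow> 'm \<Rightarrow> 'm \<Rightarrow> bool" where
  "is_kernel C f k \<longleftrightarrow> f \<in> cat_arr C \<and> k \<in> cat_arr C \<and>
     cat_cod C k = cat_dom C f \<and>
     cat_comp C f k = cat_zero C (cat_dom C k) (cat_cod C f) \<and>
     (\<forall>x \<in> cat_obj C. \<forall>g \<in> hom C x (cat_dom C f).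
        cat_comp C f g = cat_zero C x (cat_cod C f) \<longrightarrow>
        (\<exists>!u. u \<in> hom C x (cat_dom C k) \<and> cat_comp C k u = g))"

definition is_cokernel :: "('o, 'm) cat \<Rightarrow> 'm \<Rightarrow> 'm \<Rightarrow> bool" where
  "is_cokernel C f c \<longleftrightarrow> f \<in> cat_arr C \<and> c \<in> cat_arr C \<and>
     cat_dom C c = cat_cod C f \<and>
     cat_comp C c f = cat_zero C (cat_dom C f) (cat_cod C c) \<and>
     (\<forall>x \<in> cat_obj C. \<forall>g \<in> hom C (cat_cod C f) x.
        cat_comp C g f = cat_zero C (cat_dom C f) x \<longrightarrow>
        (\<exists>!u. u \<in> hom C (cat_cod C c) x \<and> cat_comp C u c = g))"

definition is_abelian :: "('o, 'm) cat \<Rightarrow> bool" where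
  "is_abelian C \<longleftrightarrow> is_additive_cat C \<and>
     (\<forall>f \<in> cat_arr C. (\<exists>k. is_kernel C f k) \<and> (\<exists>c. is_cokernel C f c)) \<and>
     (\<forall>k. is_mono C k \<longrightarrow> (\<exists>f. is_kernel C f k)) \<and>
     (\<forall>c. is_epi C c \<longrightarrow> (\<exists>f. is_cokernel C f c))"

definition is_functor ::
    "('o, 'm) cat \<Rightarrow> ('p, 'n) cat \<Rightarrow> ('o \<Rightarrow> 'p) \<Rightarrow> ('m \<Rightarrow> 'n) \<Rightarrow> bool" where
  "is_functor A B Fo Fm \<longleftrightarrow>
     (\<forall>a \<in> cat_obj A. Fo a \<in> cat_obj B) \<and>
     (\<forall>a \<in> cat_obj A. \<forall>b \<in> cat_obj A. \<forall>f \<in> hom A a b. Fm f \<in> hom B (Fo a) (Fo b)) \<and>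
     (\<forall>a \<in> cat_obj A. Fm (cat_id A a) = cat_id B (Fo a)) \<and>
     (\<forall>a \<in> cat_obj A. \<forall>b \<in> cat_obj A. \<forall>c \<in> cat_obj A. \<forall>f \<in> hom A a b. \<forall>g \<in> hom A b c.
        Fm (cat_comp A g f) = cat_comp B (Fm g) (Fm f))"

definition is_additive_functor ::
    "('o, 'm) cat \<Rightarrow> ('p, 'n) cat \<Rightarrow> ('o \<Rightarrow> 'p) \<Rightarrow> ('m \<Rightarrow> 'n) \<Rightarrow> bool" where
  "is_additive_functor A B Fo Fm \<longleftrightarrow> is_functor A B Fo Fm \<and>
     (\<forall>a \<in> cat_obj A. \<forall>b \<in> cat_obj A. \<forall>f \<in> hom A a b. \<forall>g \<in> hom A a b.
        Fm (cat_add A f g) = cat_add B (Fm f) (Fm g))"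

definition fully_faithful ::
    "('o, 'm) cat \<Rightarrow> ('p, 'n) cat \<Rightarrow> ('o \<Rightarrow> 'p) \<Rightarrow> ('m \<Rightarrow> 'n) \<Rightarrow> bool" where
  "fully_faithful A B Fo Fm \<longleftrightarrow>
     (\<forall>a \<in> cat_obj A. \<forall>b \<in> cat_obj A. bij_betw Fm (hom A a b) (hom B (Fo a) (Fo b)))"

text \<open>For an additive functor between abelian categories, left exactness is
equivalent to preservation of kernels, right exactness to preservation of cokernels.\<close>
definition left_exact ::
    "('o, 'm) cat \<Rightarrow> ('p, 'n) cat \<Rightarrow> ('o \<Rightarrow> 'p) \<Rightarrow> ('m \<Rightarrow> 'n) \<Rightarrow> bool" where
  "left_exact A B Fo Fm \<longleftrightarrow>
     (\<forall>f k. is_kernel A f k \<longrightarrow> is_kernel B (Fm f) (Fm k))"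

definition right_exact ::
    "('o, 'm) cat \<Rightarrow> ('p, 'n) cat \<Rightarrow> ('o \<Rightarrow> 'p) \<Rightarrow> ('m \<Rightarrow> 'n) \<Rightarrow> bool" where
  "right_exact A B Fo Fm \<longleftrightarrow>
     (\<forall>f c. is_cokernel A f c \<longrightarrow> is_cokernel B (Fm f) (Fm c))"

definition is_section :: "('o, 'm) cat \<Rightarrow> 'm \<Rightarrow> bool" where
  "is_section C f \<longleftrightarrow> f \<in> cat_arr C \<and>
     (\<exists>f' \<in> hom C (cat_cod C f) (cat_dom C f). cat_comp C f' f = cat_id C (cat_dom C f))"

definition is_retraction :: "('o, 'm) cat \<Rightarrow> 'm \<Rightarrow> bool" where
  "is_retraction C f \<longleftrightarrow> f \<in> cat_arr C \<and>
     (\<exists>f' \<in> hom C (cat_cod C f) (cat_dom C f). cat_comp C f f' = cat_id C (cat_cod C f))"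

definition fully_invariant :: "('o, 'm) cat \<Rightarrow> 'm \<Rightarrow> bool" where
  "fully_invariant C k \<longleftrightarrow> is_mono C k \<and>
     (\<forall>h \<in> hom C (cat_cod C k) (cat_cod C k).
        \<exists>\<alpha> \<in> hom C (cat_dom C k) (cat_dom C k). cat_comp C h k = cat_comp C k \<alpha>)"

definition fully_coinvariant :: "('o, 'm) cat \<Rightarrow> 'm \<Rightarrow> bool" where
  "fully_coinvariant C c \<longleftrightarrow> is_epi C c \<and>
     (\<forall>h \<in> hom C (cat_dom C c) (cat_dom C c).
        \<exists>\<gamma> \<in> hom C (cat_cod C c) (cat_cod C c). cat_comp C c h = cat_comp C \<gamma> c)"

text \<open>N is strongly M-Rickart: the kernel of every f : M \<rightarrow> N is a fully invariant
section (kernels are unique up to isomorphism; we require it of every kernel).\<close>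
definition strongly_rickart :: "('o, 'm) cat \<Rightarrow> 'o \<Rightarrow> 'o \<Rightarrow> bool" where
  "strongly_rickart C M N \<longleftrightarrow>
     (\<forall>f \<in> hom C M N. \<forall>k. is_kernel C f k \<longrightarrow> fully_invariant C k \<and> is_section C k)"

definition dual_strongly_rickart :: "('o, 'm) cat \<Rightarrow> 'o \<Rightarrow> 'o \<Rightarrow> bool" where
  "dual_strongly_rickart C M N \<longleftrightarrow>
     (\<forall>f \<in> hom C M N. \<forall>c. is_cokernel C f c \<longrightarrow> fully_coinvariant C c \<and> is_retraction C c)"

end

theory Submission
  imports Defs
begin

text \<open>A fully faithful functor identifies the relevant hom-sets, so being a section and being
  fully invariant are reflected and preserved by \<open>F\<close>; it is the section property that supplies
  the monomorphisms, which \<open>F\<close> need not preserve in general. If \<open>F\<close> preserves kernels, \<open>F k\<close> is a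
  kernel of \<open>F f\<close>, and any other kernel of \<open>F f\<close> differs from it by an isomorphism, which does
  not affect being a fully invariant section. Part (2) is part (1) read in the opposite categories.\<close>

lemma abelian_is_category: "is_abelian C \<Longrightarrow> is_category C"
  by (simp add: is_abelian_def is_additive_cat_def is_preadditive_def)

lemma homD: "f \<in> hom C a b \<Longrightarrow> f \<in> cat_arr C \<and> cat_dom C f = a \<and> cat_cod C f = b"
  by (simp add: hom_def)

lemma hom_objD: "is_category C \<Longrightarrow> f \<in> hom C a b \<Longrightarrow> a \<in> cat_obj C \<and> b \<in> cat_obj C"
  by (auto simp: is_category_def hom_def)

lemma comp_in_hom:
  "is_category C \<Longrightarrow> f \<in> hom C a b \<Longrightarrow> g \<in> hom C b c \<Longrightarrow> cat_comp C g f \<in> hom C a c"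
  using hom_objD[of C f a b] hom_objD[of C g b c] unfolding is_category_def by blast

lemma comp_assoc:
  "is_category C \<Longrightarrow> f \<in> hom C a b \<Longrightarrow> g \<in> hom C b c \<Longrightarrow> h \<in> hom C c d
   \<Longrightarrow> cat_comp C h (cat_comp C g f) = cat_comp C (cat_comp C h g) f"
  using hom_objD[of C f a b] hom_objD[of C h c d] unfolding is_category_def by blast

lemma id_in_hom: "is_category C \<Longrightarrow> a \<in> cat_obj C \<Longrightarrow> cat_id C a \<in> hom C a a"
  unfolding is_category_def by blast

lemma comp_id_right: "is_category C \<Longrightarrow> f \<in> hom C a b \<Longrightarrow> cat_comp C f (cat_id C a) = f"
  using hom_objD[of C f a b] unfolding is_category_def by blast

lemma comp_id_left: "is_category C \<Longrightarrow> f \<in> hom C a b \<Longrightarrow> cat_comp C (cat_id C b) f = f"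
  using hom_objD[of C f a b] unfolding is_category_def by blast

lemma section_imp_mono:
  assumes C: "is_category C" and sec: "is_section C k"
  shows "is_mono C k"
  unfolding is_mono_def
proof (intro conjI ballI impI)
  show "k \<in> cat_arr C" using sec unfolding is_section_def by blast
  then have k: "k \<in> hom C (cat_dom C k) (cat_cod C k)" by (simp add: hom_def)
  obtain r where r: "r \<in> hom C (cat_cod C k) (cat_dom C k)"
    and rk: "cat_comp C r k = cat_id C (cat_dom C k)"
    using sec unfolding is_section_def by blast
  fix x g h assume g: "g \<in> hom C x (cat_dom C k)" and h: "h \<in> hom C x (cat_dom C k)"
    and kg_kh: "cat_comp C k g = cat_comp C k h"
  have "g = cat_comp C (cat_comp C r k) g" using rk comp_id_left[OF C g] by simp
  also have "\<dots> = cat_comp C r (cat_comp C k h)" using comp_assoc[OF C g k r] kg_kh by simp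
  also have "\<dots> = cat_comp C (cat_comp C r k) h" using comp_assoc[OF C h k r] by simp
  also have "\<dots> = h" using rk comp_id_left[OF C h] by simp
  finally show "g = h" .
qed

text \<open>Zero morphisms are transposed as well, so that a cokernel in \<open>C\<close> is literally a kernel
  in \<open>cat_op C\<close>.\<close>

definition cat_op :: "('o, 'm) cat \<Rightarrow> ('o, 'm) cat" where
  "cat_op C = C\<lparr>cat_dom := cat_cod C, cat_cod := cat_dom C,
     cat_comp := \<lambda>g f. cat_comp C f g, cat_zero := \<lambda>a b. cat_zero C b a\<rparr>"

lemma cat_op_simps [simp]:
  "cat_obj (cat_op C) = cat_obj C" "cat_arr (cat_op C) = cat_arr C"
  "cat_dom (cat_op C) = cat_cod C" "cat_cod (cat_op C) = cat_dom C"
  "cat_comp (cat_op C) g f = cat_comp C f g" "cat_id (cat_op C) = cat_id C"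
  "cat_zero (cat_op C) a b = cat_zero C b a"
  by (simp_all add: cat_op_def)

lemma hom_cat_op [simp]: "hom (cat_op C) a b = hom C b a"
  by (auto simp: hom_def)

lemma is_category_cat_op: "is_category C \<Longrightarrow> is_category (cat_op C)"
  unfolding is_category_def by (simp add: ball_conj_distrib)

lemma is_mono_cat_op_iff: "is_mono (cat_op C) k \<longleftrightarrow> is_epi C k"
  by (simp add: is_mono_def is_epi_def)

lemma is_kernel_cat_op_iff: "is_kernel (cat_op C) f k \<longleftrightarrow> is_cokernel C f k"
  by (simp add: is_kernel_def is_cokernel_def)

lemma is_section_cat_op_iff: "is_section (cat_op C) k \<longleftrightarrow> is_retraction C k"
  by (simp add: is_section_def is_retraction_def)

lemma fully_invariant_cat_op_iff: "fully_invariant (cat_op C) k \<longleftrightarrow> fully_coinvariant C k"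
  by (simp add: fully_invariant_def fully_coinvariant_def is_mono_cat_op_iff)

lemma strongly_rickart_cat_op_iff:
  "strongly_rickart (cat_op C) N M \<longleftrightarrow> dual_strongly_rickart C M N"
  by (simp add: strongly_rickart_def dual_strongly_rickart_def is_kernel_cat_op_iff
      fully_invariant_cat_op_iff is_section_cat_op_iff)

lemma left_exact_cat_op_iff:
  "left_exact (cat_op A) (cat_op B) Fo Fm \<longleftrightarrow> right_exact A B Fo Fm"
  by (simp add: left_exact_def right_exact_def is_kernel_cat_op_iff)

lemma is_functor_cat_op: "is_functor A B Fo Fm \<Longrightarrow> is_functor (cat_op A) (cat_op B) Fo Fm"
  unfolding is_functor_def by simp

lemma fully_faithful_cat_op:
  "fully_faithful A B Fo Fm \<Longrightarrow> fully_faithful (cat_op A) (cat_op B) Fo Fm"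
  by (simp add: fully_faithful_def)

lemma kernel_in_hom: "is_kernel C f k \<Longrightarrow> k \<in> hom C (cat_dom C k) (cat_dom C f)"
  by (simp add: is_kernel_def hom_def)

lemma kernels_isomorphic:
  assumes C: "is_category C" and k1: "is_kernel C g k1" and k2: "is_kernel C g k2"
  obtains u v where "u \<in> hom C (cat_dom C k2) (cat_dom C k1)"
    and "v \<in> hom C (cat_dom C k1) (cat_dom C k2)" and "cat_comp C k1 u = k2"
    and "cat_comp C v u = cat_id C (cat_dom C k2)" and "cat_comp C u v = cat_id C (cat_dom C k1)"
proof -
  have endo_unique: "w = cat_id C (cat_dom C k)"
    if k: "is_kernel C g k" and w: "w \<in> hom C (cat_dom C k) (cat_dom C k)"
      and kw: "cat_comp C k w = k" for k w
  proof -
    have kh: "k \<in> hom C (cat_dom C k) (cat_dom C g)" using kernel_in_hom[OF k] .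
    have o: "cat_dom C k \<in> cat_obj C" using hom_objD[OF C kh] by blast
    have "\<exists>!w. w \<in> hom C (cat_dom C k) (cat_dom C k) \<and> cat_comp C k w = k"
      using k o kh unfolding is_kernel_def by blast
    then show ?thesis using w kw id_in_hom[OF C o] comp_id_right[OF C kh] by blast
  qed
  have factor: "\<exists>u. u \<in> hom C (cat_dom C k') (cat_dom C k) \<and> cat_comp C k u = k'"
    if k: "is_kernel C g k" and k': "is_kernel C g k'" for k k'
  proof -
    have kh: "k' \<in> hom C (cat_dom C k') (cat_dom C g)" using kernel_in_hom[OF k'] .
    show ?thesis using k k' kh hom_objD[OF C kh] unfolding is_kernel_def by metis
  qed
  obtain u where u: "u \<in> hom C (cat_dom C k2) (cat_dom C k1)" "cat_comp C k1 u = k2"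
    using factor[OF k1 k2] by blast
  obtain v where v: "v \<in> hom C (cat_dom C k1) (cat_dom C k2)" "cat_comp C k2 v = k1"
    using factor[OF k2 k1] by blast
  note k1h = kernel_in_hom[OF k1] and k2h = kernel_in_hom[OF k2]
  have "cat_comp C v u = cat_id C (cat_dom C k2)"
    using endo_unique[OF k2 comp_in_hom[OF C u(1) v(1)]] comp_assoc[OF C u(1) v(1) k2h] u v by simp
  moreover have "cat_comp C u v = cat_id C (cat_dom C k1)"
    using endo_unique[OF k1 comp_in_hom[OF C v(1) u(1)]] comp_assoc[OF C v(1) u(1) k1h] u v by simp
  ultimately show ?thesis using that u v by blast
qed

lemma fully_invariant_section_comp_iso:
  assumes C: "is_category C" and k: "k \<in> hom C K X"
    and u: "u \<in> hom C K' K" and v: "v \<in> hom C K K'"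
    and vu: "cat_comp C v u = cat_id C K'" and uv: "cat_comp C u v = cat_id C K"
    and fi: "fully_invariant C k" and sec: "is_section C k"
  shows "fully_invariant C (cat_comp C k u) \<and> is_section C (cat_comp C k u)"
proof -
  let ?k' = "cat_comp C k u"
  have k': "?k' \<in> hom C K' X" using comp_in_hom[OF C u k] .
  obtain r where r: "r \<in> hom C X K" and rk: "cat_comp C r k = cat_id C K"
    using sec homD[OF k] unfolding is_section_def by auto
  have "cat_comp C (cat_comp C v r) ?k' = cat_comp C v (cat_comp C (cat_comp C r k) u)"
    using comp_assoc[OF C k' r v] comp_assoc[OF C u k r] by simp
  also have "\<dots> = cat_id C K'" using rk comp_id_left[OF C u] vu by simp
  finally have sec': "is_section C ?k'"
    unfolding is_section_def using homD[OF k'] comp_in_hom[OF C r v] by auto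
  have "\<exists>\<alpha> \<in> hom C K' K'. cat_comp C h ?k' = cat_comp C ?k' \<alpha>" if h: "h \<in> hom C X X" for h
  proof -
    obtain \<alpha> where \<alpha>: "\<alpha> \<in> hom C K K" and h\<alpha>: "cat_comp C h k = cat_comp C k \<alpha>"
      using fi h homD[OF k] unfolding fully_invariant_def by auto
    have \<alpha>u: "cat_comp C \<alpha> u \<in> hom C K' K" using comp_in_hom[OF C u \<alpha>] .
    have k'v: "cat_comp C ?k' v = k"
      using comp_assoc[OF C v u k] uv comp_id_right[OF C k] by simp
    have "cat_comp C ?k' (cat_comp C v (cat_comp C \<alpha> u)) = cat_comp C k (cat_comp C \<alpha> u)"
      using comp_assoc[OF C \<alpha>u v k'] k'v by simp
    also have "\<dots> = cat_comp C h ?k'"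
      using comp_assoc[OF C u \<alpha> k] comp_assoc[OF C u k h] h\<alpha> by simp
    finally show ?thesis using comp_in_hom[OF C \<alpha>u v] by metis
  qed
  then show ?thesis
    using sec' section_imp_mono[OF C sec'] homD[OF k'] unfolding fully_invariant_def by auto
qed

lemma kernel_fully_invariant_section_transfer:
  assumes C: "is_category C" and k1: "is_kernel C g k1" and k2: "is_kernel C g k2"
    and "fully_invariant C k1" and "is_section C k1"
  shows "fully_invariant C k2 \<and> is_section C k2"
proof -
  obtain u v where "u \<in> hom C (cat_dom C k2) (cat_dom C k1)"
    and "v \<in> hom C (cat_dom C k1) (cat_dom C k2)" and "cat_comp C k1 u = k2"
    and "cat_comp C v u = cat_id C (cat_dom C k2)" and "cat_comp C u v = cat_id C (cat_dom C k1)"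
    using kernels_isomorphic[OF C k1 k2] by blast
  with kernel_in_hom[OF k1] show ?thesis
    using fully_invariant_section_comp_iso[OF C] assms(4,5) by metis
qed

lemma functor_hom:
  "is_functor A B Fo Fm \<Longrightarrow> is_category A \<Longrightarrow> f \<in> hom A a b \<Longrightarrow> Fm f \<in> hom B (Fo a) (Fo b)"
  using hom_objD[of A f a b] unfolding is_functor_def by blast

lemma functor_comp:
  "is_functor A B Fo Fm \<Longrightarrow> is_category A \<Longrightarrow> f \<in> hom A a b \<Longrightarrow> g \<in> hom A b c
   \<Longrightarrow> Fm (cat_comp A g f) = cat_comp B (Fm g) (Fm f)"
  using hom_objD[of A f a b] hom_objD[of A g b c] unfolding is_functor_def by blast

lemma functor_id: "is_functor A B Fo Fm \<Longrightarrow> a \<in> cat_obj A \<Longrightarrow> Fm (cat_id A a) = cat_id B (Fo a)"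
  unfolding is_functor_def by blast

lemma fully_faithful_hom_image:
  "fully_faithful A B Fo Fm \<Longrightarrow> a \<in> cat_obj A \<Longrightarrow> b \<in> cat_obj A
   \<Longrightarrow> hom B (Fo a) (Fo b) = Fm ` hom A a b"
  unfolding fully_faithful_def bij_betw_def by blast

lemma fully_faithful_inj_on_hom:
  "fully_faithful A B Fo Fm \<Longrightarrow> a \<in> cat_obj A \<Longrightarrow> b \<in> cat_obj A \<Longrightarrow> inj_on Fm (hom A a b)"
  unfolding fully_faithful_def bij_betw_def by blast

locale fully_faithful_functor =
  fixes A :: "('o, 'm) cat" and B :: "('p, 'n) cat" and Fo :: "'o \<Rightarrow> 'p" and Fm :: "'m \<Rightarrow> 'n"
  assumes A_cat: "is_category A" and B_cat: "is_category B"
    and F_functor: "is_functor A B Fo Fm" and F_fully_faithful: "fully_faithful A B Fo Fm"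
begin

lemmas F_hom = functor_hom[OF F_functor A_cat]
  and F_comp = functor_comp[OF F_functor A_cat]
  and F_id = functor_id[OF F_functor]

lemma eq_iff_F_eq:
  assumes "f \<in> hom A a b" and "g \<in> hom A a b"
  shows "f = g \<longleftrightarrow> Fm f = Fm g"
  using assms hom_objD[OF A_cat] fully_faithful_inj_on_hom[OF F_fully_faithful]
  by (metis inj_onD)

lemma section_iff_F_section:
  assumes k: "k \<in> hom A K X"
  shows "is_section A k \<longleftrightarrow> is_section B (Fm k)"
proof -
  have K: "K \<in> cat_obj A" and X: "X \<in> cat_obj A" using hom_objD[OF A_cat k] by auto
  have "cat_comp A r k = cat_id A K \<longleftrightarrow> cat_comp B (Fm r) (Fm k) = cat_id B (Fo K)"
    if r: "r \<in> hom A X K" for r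
    using eq_iff_F_eq[OF comp_in_hom[OF A_cat k r] id_in_hom[OF A_cat K]] F_comp[OF k r] F_id[OF K]
    by simp
  then show ?thesis
    using homD[OF k] homD[OF F_hom[OF k]] fully_faithful_hom_image[OF F_fully_faithful X K]
    by (auto simp: is_section_def)
qed

lemma fully_invariant_iff_F_fully_invariant:
  assumes k: "k \<in> hom A K X" and sec: "is_section A k"
  shows "fully_invariant A k \<longleftrightarrow> fully_invariant B (Fm k)"
proof -
  have K: "K \<in> cat_obj A" and X: "X \<in> cat_obj A" using hom_objD[OF A_cat k] by auto
  have Fk: "Fm k \<in> hom B (Fo K) (Fo X)" using F_hom[OF k] .
  have "cat_comp A h k = cat_comp A k \<alpha> \<longleftrightarrow> cat_comp B (Fm h) (Fm k) = cat_comp B (Fm k) (Fm \<alpha>)"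
    if h: "h \<in> hom A X X" and \<alpha>: "\<alpha> \<in> hom A K K" for h \<alpha>
    using eq_iff_F_eq[OF comp_in_hom[OF A_cat k h] comp_in_hom[OF A_cat \<alpha> k]]
      F_comp[OF k h] F_comp[OF \<alpha> k] by simp
  moreover have "is_mono A k" "is_mono B (Fm k)"
    using sec section_iff_F_section[OF k] section_imp_mono A_cat B_cat by auto
  ultimately show ?thesis
    using homD[OF k] homD[OF Fk] fully_faithful_hom_image[OF F_fully_faithful] K X
    by (auto simp: fully_invariant_def)
qed

lemma fully_invariant_section_iff_F:
  assumes "k \<in> hom A K X"
  shows "fully_invariant A k \<and> is_section A k \<longleftrightarrow> fully_invariant B (Fm k) \<and> is_section B (Fm k)"
  using assms fully_invariant_iff_F_fully_invariant section_iff_F_section by blast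

lemma strongly_rickart_iff_F_strongly_rickart:
  assumes left_exact: "left_exact A B Fo Fm" and M: "M \<in> cat_obj A" and N: "N \<in> cat_obj A"
    and kernels: "\<forall>f \<in> hom A M N. \<exists>k. is_kernel A f k"
  shows "strongly_rickart A M N \<longleftrightarrow> strongly_rickart B (Fo M) (Fo N)"
proof -
  have kernel_hom: "k \<in> hom A (cat_dom A k) M" if "f \<in> hom A M N" "is_kernel A f k" for f k
    using that kernel_in_hom homD by metis
  have F_kernel: "is_kernel B (Fm f) (Fm k)" if "is_kernel A f k" for f k
    using left_exact that unfolding left_exact_def by blast
  show ?thesis
  proof
    assume rickart: "strongly_rickart A M N"
    show "strongly_rickart B (Fo M) (Fo N)"
      unfolding strongly_rickart_def
    proof (intro ballI allI impI)
      fix g k' assume "g \<in> hom B (Fo M) (Fo N)" and k': "is_kernel B g k'"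
      then obtain f where f: "f \<in> hom A M N" and g: "g = Fm f"
        using fully_faithful_hom_image[OF F_fully_faithful M N] by blast
      obtain k where k: "is_kernel A f k" using kernels f by blast
      have "fully_invariant B (Fm k) \<and> is_section B (Fm k)"
        using rickart f k fully_invariant_section_iff_F[OF kernel_hom[OF f k]]
        unfolding strongly_rickart_def by blast
      then show "fully_invariant B k' \<and> is_section B k'"
        using kernel_fully_invariant_section_transfer[OF B_cat F_kernel[OF k] k'[unfolded g]] by blast
    qed
  next
    assume rickart: "strongly_rickart B (Fo M) (Fo N)"
    show "strongly_rickart A M N"
      unfolding strongly_rickart_def
    proof (intro ballI allI impI)
      fix f k assume f: "f \<in> hom A M N" and k: "is_kernel A f k"
      have "fully_invariant B (Fm k) \<and> is_section B (Fm k)"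
        using rickart F_hom[OF f] F_kernel[OF k] unfolding strongly_rickart_def by blast
      then show "fully_invariant A k \<and> is_section A k"
        using fully_invariant_section_iff_F[OF kernel_hom[OF f k]] by blast
    qed
  qed
qed

lemma fully_faithful_functor_cat_op: "fully_faithful_functor (cat_op A) (cat_op B) Fo Fm"
  using A_cat B_cat F_functor F_fully_faithful
  by unfold_locales (simp_all add: is_category_cat_op is_functor_cat_op fully_faithful_cat_op)

lemma dual_strongly_rickart_iff_F_dual_strongly_rickart:
  assumes "right_exact A B Fo Fm" and "M \<in> cat_obj A" and "N \<in> cat_obj A"
    and "\<forall>f \<in> hom A M N. \<exists>c. is_cokernel A f c"
  shows "dual_strongly_rickart A M N \<longleftrightarrow> dual_strongly_rickart B (Fo M) (Fo N)"
  using fully_faithful_functor.strongly_rickart_iff_F_strongly_rickart[OF fully_faithful_functor_cat_op, of N M] assms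
  by (simp add: strongly_rickart_cat_op_iff left_exact_cat_op_iff is_kernel_cat_op_iff)

end

theorem theorem4p1:
  fixes A :: "('o, 'm) cat" and B :: "('p, 'n) cat"
    and Fo :: "'o \<Rightarrow> 'p" and Fm :: "'m \<Rightarrow> 'n" and M N :: 'o
  assumes "is_abelian A" and "is_abelian B"
    and "is_additive_functor A B Fo Fm" and "fully_faithful A B Fo Fm"
    and "M \<in> cat_obj A" and "N \<in> cat_obj A"
  shows "(left_exact A B Fo Fm \<longrightarrow>
            (strongly_rickart A M N \<longleftrightarrow> strongly_rickart B (Fo M) (Fo N))) \<and>
         (right_exact A B Fo Fm \<longrightarrow>
            (dual_strongly_rickart A M N \<longleftrightarrow> dual_strongly_rickart B (Fo M) (Fo N)))"
proof -
  interpret fully_faithful_functor A B Fo Fm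
    using assms by unfold_locales (simp_all add: abelian_is_category is_additive_functor_def)
  have "\<forall>f \<in> hom A M N. (\<exists>k. is_kernel A f k) \<and> (\<exists>c. is_cokernel A f c)"
    using \<open>is_abelian A\<close> unfolding is_abelian_def hom_def by blast
  then show ?thesis
    using strongly_rickart_iff_F_strongly_rickart dual_strongly_rickart_iff_F_dual_strongly_rickart
      \<open>M \<in> cat_obj A\<close> \<open>N \<in> cat_obj A\<close>
    by blast
qed

end
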